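(* Let $1<p<\infty$, let $\Psi:\mathbb{R}\to\mathbb{R}$ be a locally absolutely continuous homeomorphism, $w\in A_p(\mathbb{R})$ and $f\in L^p(\mathbb{R},w)$. Then $\mathcal{B}f\circ\Psi$ is locally integrable on $\mathbb{R}$, where $$\mathcal{B}f(x)=\frac1\pi\int_{\mathbb{R}}\log\Big(\frac{|x-t|}{1+|t|}\Big)f(t)\,dt.$$
   Context: $A_p(\mathbb{R})$ is the Muckenhoupt class of weights $w$ with $\sup_I\big(\frac1{|I|}\int_Iw\big)\big(\frac1{|I|}\int_Iw^{1-p'}\big)^{p-1}<\infty$ over intervals $I$; $L^p(\mathbb{R},w)$ has norm $(\int|f|^pw)^{1/p}$. *)

theory Defs
  imports "HOL-Analysis.Analysis"
begin

definition abs_continuous_on_interval :: "real \<Rightarrow> real \<Rightarrow> (real \<Rightarrow> real) \<Rightarrow> bool" where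
  "abs_continuous_on_interval a b F \<longleftrightarrow>
     (\<forall>\<epsilon>>0. \<exists>\<delta>>0. \<forall>(n::nat) (xs::nat \<Rightarrow> real) (ys::nat \<Rightarrow> real).
        (\<forall>i<n. a \<le> xs i \<and> xs i \<le> ys i \<and> ys i \<le> b) \<and>
        (\<forall>i<n. \<forall>j<n. i \<noteq> j \<longrightarrow> ys i \<le> xs j \<or> ys j \<le> xs i) \<and>
        (\<Sum>i<n. ys i - xs i) < \<delta>
        \<longrightarrow> (\<Sum>i<n. \<bar>F (ys i) - F (xs i)\<bar>) < \<epsilon>)"

definition locally_abs_continuous :: "(real \<Rightarrow> real) \<Rightarrow> bool" where
  "locally_abs_continuous F \<longleftrightarrow> (\<forall>a b. a < b \<longrightarrow> abs_continuous_on_interval a b F)"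

definition conj_exp :: "real \<Rightarrow> real" where
  "conj_exp p = p / (p - 1)"

definition Ap_weight :: "real \<Rightarrow> (real \<Rightarrow> real) \<Rightarrow> bool" where
  "Ap_weight p w \<longleftrightarrow>
     w \<in> borel_measurable lborel \<and>
     (AE x in lborel. 0 < w x) \<and>
     (\<forall>a b. a < b \<longrightarrow>
        set_integrable lborel {a..b} w \<and>
        set_integrable lborel {a..b} (\<lambda>x. w x powr (1 - conj_exp p))) \<and>
     (\<exists>C. \<forall>a b. a < b \<longrightarrow>
        ((1 / (b - a)) * (LINT x:{a..b}|lborel. w x)) *
        ((1 / (b - a)) * (LINT x:{a..b}|lborel. w x powr (1 - conj_exp p))) powr (p - 1) \<le> C)"

definition in_Lp_weighted :: "real \<Rightarrow> (real \<Rightarrow> real) \<Rightarrow> (real \<Rightarrow> real) \<Rightarrow> bool" where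
  "in_Lp_weighted p w f \<longleftrightarrow>
     f \<in> borel_measurable lborel \<and>
     integrable lborel (\<lambda>x. \<bar>f x\<bar> powr p * w x)"

definition opB :: "(real \<Rightarrow> real) \<Rightarrow> real \<Rightarrow> real" where
  "opB f x = (1 / pi) * (LINT t|lborel. ln (\<bar>x - t\<bar> / (1 + \<bar>t\<bar>)) * f t)"

definition locally_integrable :: "(real \<Rightarrow> real) \<Rightarrow> bool" where
  "locally_integrable g \<longleftrightarrow> (\<forall>K. compact K \<longrightarrow> set_integrable lborel K g)"

end

theory Submission
  imports Defs
begin

text \<open>Write \<open>\<sigma> = w powr (1 - p')\<close>. Young's inequality
  \<open>|f| g \<le> |f| powr p * w / p + g powr p' * \<sigma> / p'\<close> reduces the integrability of
  \<open>t \<mapsto> ln (|x - t| / (1 + |t|)) * f t\<close> to the finiteness of \<open>\<integral> g powr p' * \<sigma>\<close> for a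
  majorant \<open>g\<close> of the kernel, which behaves like \<open>|x - t| powr -\<gamma>\<close> near \<open>t = x\<close> and like
  \<open>1 / (1 + |t|)\<close> at infinity.

  Combining the \<open>A\<^sub>p\<close> condition with Hoelder's inequality, every interval carries a fixed
  fraction of the \<open>w\<close>- and of the \<open>\<sigma>\<close>-mass of any interval four times as long that contains
  it. Hence the \<open>\<sigma>\<close>-mass of the interval of radius \<open>2 powr -j\<close> around \<open>x\<close> decays
  geometrically, which makes \<open>|x - t| powr -\<delta> * \<sigma> t\<close> integrable near \<open>x\<close> for some
  \<open>\<delta> > 0\<close>; and the \<open>w\<close>-mass of \<open>[-2^n, 2^n]\<close> grows geometrically, which by \<open>A\<^sub>p\<close> again
  makes \<open>\<sigma> t * (1 + |t|) powr -p'\<close> integrable. The resulting bounds are uniform for \<open>x\<close>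
  in compact sets, so \<open>\<B>f\<close> is locally bounded and \<open>\<B>f \<circ> \<Psi>\<close> is locally integrable for
  every continuous \<open>\<Psi>\<close>.\<close>

lemma ex_power_of_two_bracket:
  assumes "1 \<le> (y::real)"
  obtains n :: nat where "2 ^ n \<le> y" "y < 2 ^ Suc n"
proof -
  obtain m :: nat where "y < 2 ^ m"
    using real_arch_pow[of 2 y] by auto
  then have "\<exists>n. \<not> y < 2 ^ n \<and> y < 2 ^ Suc n"
    using assms by (intro exists_least_lemma) auto
  then show ?thesis
    using that by (auto simp: not_less)
qed

lemma power_powr_commute:
  fixes x :: real
  assumes "0 < x"
  shows "(x ^ n) powr a = (x powr a) ^ n"
  using assms by (simp add: powr_realpow[symmetric] powr_powr powr_power mult.commute)

lemma Youngs_inequality_weighted: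
  fixes a b v p q :: real
  assumes "1 < p" "1 < q" "1/p + 1/q = 1" "0 \<le> a" "0 \<le> b" "0 < v"
  shows "a * b \<le> a powr p * v / p + b powr q * v powr (1 - q) / q"
proof -
  have "(a * v powr (1/p)) * (b * v powr (- (1/p)))
      \<le> (a * v powr (1/p)) powr p / p + (b * v powr (- (1/p))) powr q / q"
    by (rule Youngs_inequality) (use assms in auto)
  moreover have "(a * v powr (1/p)) * (b * v powr (- (1/p))) = a * b"
    using assms by (simp add: powr_minus field_simps)
  moreover have "(a * v powr (1/p)) powr p = a powr p * v"
    using assms by (simp add: powr_mult powr_powr)
  moreover have "(b * v powr (- (1/p))) powr q = b powr q * v powr (1 - q)"
  proof -
    have "- (1/p) * q = 1 - q"
      using assms by (simp add: field_simps)
    then show ?thesis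
      using assms by (simp add: powr_mult powr_powr)
  qed
  ultimately show ?thesis by simp
qed

lemma add_powr_le:
  fixes a b r :: real
  assumes "0 \<le> a" "0 \<le> b" "0 < r"
  shows "(a + b) powr r \<le> 2 powr r * (a powr r + b powr r)"
proof -
  have "(a + b) powr r \<le> (2 * max a b) powr r"
    using assms by (intro powr_mono2) auto
  also have "\<dots> = 2 powr r * max a b powr r"
    using assms by (simp add: powr_mult)
  also have "max a b powr r \<le> a powr r + b powr r"
    by (simp add: max_def)
  then have "2 powr r * max a b powr r \<le> 2 powr r * (a powr r + b powr r)"
    by (intro mult_left_mono) auto
  finally show ?thesis .
qed

lemma neg_ln_le_powr:
  fixes s \<gamma> :: real
  assumes "0 < s" "0 < \<gamma>"
  shows "- ln s \<le> s powr (- \<gamma>) / \<gamma>"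
proof -
  have "ln (s powr (- \<gamma>)) \<le> s powr (- \<gamma>) - 1"
    by (rule ln_le_minus_one) (use assms in simp)
  then show ?thesis
    using assms by (simp add: ln_powr field_simps)
qed

lemma ln_kernel_le:
  fixes x t R :: real
  assumes "\<bar>x\<bar> \<le> R"
  shows "ln (\<bar>x - t\<bar> / (1 + \<bar>t\<bar>)) \<le> R / (1 + \<bar>t\<bar>)"
proof (cases "x = t")
  case False
  define s u where "s = \<bar>x - t\<bar>" and "u = 1 + \<bar>t\<bar>"
  have "0 < s" "1 \<le> u"
    unfolding s_def u_def using False by auto
  then have "ln (s / u) \<le> s / u - 1"
    by (intro ln_le_minus_one) simp
  also have "\<dots> = (s - u) / u"
    using \<open>1 \<le> u\<close> by (simp add: field_simps)
  also have "\<dots> \<le> R / u"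
    using \<open>1 \<le> u\<close> assms unfolding s_def u_def by (intro divide_right_mono) auto
  finally show ?thesis
    unfolding s_def u_def .
qed (use assms in simp)

lemma neg_ln_kernel_le:
  fixes x t R \<gamma> :: real
  assumes "0 < \<gamma>" "\<bar>x\<bar> \<le> R" "x \<noteq> t"
  shows "- ln (\<bar>x - t\<bar> / (1 + \<bar>t\<bar>))
    \<le> 4 * (1 + R)\<^sup>2 / (1 + \<bar>t\<bar>)
      + (if 0 < \<bar>x - t\<bar> \<and> \<bar>x - t\<bar> < 1 then \<bar>x - t\<bar> powr (- \<gamma>) / \<gamma> else 0)"
    (is "_ \<le> ?A + ?B")
proof -
  define s u where "s = \<bar>x - t\<bar>" and "u = 1 + \<bar>t\<bar>"
  have s: "0 < s" "\<bar>t\<bar> - \<bar>x\<bar> \<le> s" and u: "1 \<le> u" and R: "0 \<le> R"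
    unfolding s_def u_def using assms by auto
  have "0 \<le> ?B" "- ln s \<le> ?B"
    unfolding s_def[symmetric] using neg_ln_le_powr[OF s(1) assms(1)] assms s by auto
  show ?thesis
  proof (cases "u \<le> 2 * s")
    case True
    have "- ln (s / u) = ln (u / s)"
      using s u by (simp add: ln_div)
    also have "\<dots> \<le> u / s - 1"
      by (rule ln_le_minus_one) (use s u in simp)
    also have "\<dots> = (u - s) / s"
      using s by (simp add: field_simps)
    also have "\<dots> \<le> (1 + R) / s"
      using s assms unfolding u_def by (intro divide_right_mono) auto
    also have "\<dots> \<le> 2 * (1 + R) / u"
      using mult_left_mono[OF True, of "1 + R"] s u R by (simp add: field_simps)
    also have "\<dots> \<le> ?A"
      unfolding u_def[symmetric] using u R
      by (intro divide_right_mono) (auto simp: power2_eq_square algebra_simps)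
    finally show ?thesis
      unfolding s_def u_def using \<open>0 \<le> ?B\<close> by linarith
  next
    case False
    then have u_le: "u \<le> 2 * (1 + R)"
      using s assms unfolding u_def by (smt (verit))
    have "ln u \<le> u - 1"
      by (rule ln_le_minus_one) (use u in simp)
    also have "\<dots> \<le> (1 + 2 * R) * (2 * (1 + R)) / u"
    proof -
      have "(u - 1) * u \<le> (1 + 2 * R) * (2 * (1 + R))"
        by (rule mult_mono) (use u u_le R in auto)
      then show ?thesis
        using u by (simp add: field_simps)
    qed
    also have "\<dots> \<le> ?A"
      unfolding u_def[symmetric] using u R
      by (intro divide_right_mono) (auto simp: power2_eq_square algebra_simps)
    finally have "ln u \<le> ?A" .
    moreover have "- ln (s / u) = ln u - ln s"
      using s u by (simp add: ln_div)
    ultimately show ?thesis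
      using \<open>- ln s \<le> ?B\<close> unfolding s_def u_def by linarith
  qed
qed

lemma abs_ln_kernel_le:
  fixes x t R \<gamma> :: real
  assumes "0 < \<gamma>" "\<bar>x\<bar> \<le> R"
  shows "\<bar>ln (\<bar>x - t\<bar> / (1 + \<bar>t\<bar>))\<bar>
    \<le> 4 * (1 + R)\<^sup>2 / (1 + \<bar>t\<bar>)
      + (if 0 < \<bar>x - t\<bar> \<and> \<bar>x - t\<bar> < 1 then \<bar>x - t\<bar> powr (- \<gamma>) / \<gamma> else 0)"
    (is "_ \<le> ?A + ?B")
proof (cases "x = t")
  case False
  have "R \<le> 4 * (1 + R)\<^sup>2"
    using assms by (simp add: power2_eq_square algebra_simps)
  then have "R / (1 + \<bar>t\<bar>) \<le> ?A"
    by (intro divide_right_mono) auto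
  moreover have "0 \<le> ?B"
    using assms(1) by simp
  ultimately show ?thesis
    using ln_kernel_le[OF assms(2), of t] neg_ln_kernel_le[OF assms False]
    unfolding abs_le_iff by linarith
qed (use assms in simp)

lemma abs_ln_kernel_powr_le:
  fixes x t R \<gamma> r :: real
  assumes "0 < \<gamma>" "\<bar>x\<bar> \<le> R" "0 < r"
  shows "\<bar>ln (\<bar>x - t\<bar> / (1 + \<bar>t\<bar>))\<bar> powr r
    \<le> 2 powr r * ((4 * (1 + R)\<^sup>2) powr r * (1 + \<bar>t\<bar>) powr (- r)
      + \<gamma> powr (- r) * (if 0 < \<bar>x - t\<bar> \<and> \<bar>x - t\<bar> < 1 then \<bar>x - t\<bar> powr (- (\<gamma> * r)) else 0))"
proof -
  define a b where "a = 4 * (1 + R)\<^sup>2 / (1 + \<bar>t\<bar>)"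
    and "b = (if 0 < \<bar>x - t\<bar> \<and> \<bar>x - t\<bar> < 1 then \<bar>x - t\<bar> powr (- \<gamma>) / \<gamma> else 0)"
  have ab: "0 \<le> a" "0 \<le> b"
    unfolding a_def b_def using assms by auto
  have "\<bar>ln (\<bar>x - t\<bar> / (1 + \<bar>t\<bar>))\<bar> powr r \<le> (a + b) powr r"
    unfolding a_def b_def using abs_ln_kernel_le[OF assms(1,2)] assms(3) by (intro powr_mono2) auto
  also have "\<dots> \<le> 2 powr r * (a powr r + b powr r)"
    by (rule add_powr_le[OF ab assms(3)])
  also have "a powr r = (4 * (1 + R)\<^sup>2) powr r * (1 + \<bar>t\<bar>) powr (- r)"
    unfolding a_def by (simp add: powr_divide powr_minus_divide)
  also have "b powr r = \<gamma> powr (- r)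
      * (if 0 < \<bar>x - t\<bar> \<and> \<bar>x - t\<bar> < 1 then \<bar>x - t\<bar> powr (- (\<gamma> * r)) else 0)"
    unfolding b_def using assms by (auto simp: powr_divide powr_powr powr_minus_divide powr_mult)
  finally show ?thesis .
qed

lemma neg_powr_le_dyadic:
  fixes s \<delta> :: real
  assumes "0 < s" "s < 1" "0 \<le> \<delta>"
  obtains n :: nat where "s \<le> 1 / 2 ^ n" "s powr (- \<delta>) \<le> 2 powr \<delta> * (2 powr \<delta>) ^ n"
proof -
  obtain n :: nat where n: "2 ^ n \<le> 1 / s" "1 / s < 2 ^ Suc n"
    using ex_power_of_two_bracket[of "1 / s"] assms by auto
  have "s powr (- \<delta>) = (1 / s) powr \<delta>"
    using assms by (simp add: powr_minus_divide powr_divide)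
  also have "\<dots> \<le> (2 ^ Suc n) powr \<delta>"
    using n assms by (intro powr_mono2) auto
  also have "\<dots> = 2 powr \<delta> * (2 powr \<delta>) ^ n"
    by (subst power_powr_commute) auto
  finally show ?thesis
    using n(1) assms by (intro that) (simp_all add: field_simps)
qed

lemma ex_two_powr_mult_less_one:
  fixes \<rho> :: real
  assumes "0 \<le> \<rho>" "\<rho> < 1"
  obtains \<delta> where "0 < \<delta>" "2 powr \<delta> * \<rho> < 1"
proof
  show "0 < log 2 (2 / (1 + \<rho>))"
    using assms by simp
  show "2 powr log 2 (2 / (1 + \<rho>)) * \<rho> < 1"
    using assms by (simp add: field_simps)
qed

section \<open>Masses of intervals under a weight\<close>

locale interval_weight =
  fixes h :: "real \<Rightarrow> real"
  assumes measurable_weight [measurable]: "h \<in> borel_measurable lborel"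
    and AE_weight_pos: "AE x in lborel. 0 < h x"
    and set_integrable_weight: "\<And>a b. a < b \<Longrightarrow> set_integrable lborel {a..b} h"
begin

definition mass :: "real \<Rightarrow> real \<Rightarrow> real" where
  "mass a b = (LINT x:{a..b}|lborel. h x)"

lemma integrable_indicator_weight: "integrable lborel (\<lambda>x. indicator {a..b} x * h x)"
proof -
  have "set_integrable lborel {a..max b (a + 1)} h"
    by (rule set_integrable_weight) simp
  then have "set_integrable lborel {a..b} h"
    by (rule set_integrable_subset) auto
  then show ?thesis
    unfolding set_integrable_def by simp
qed

lemma mass_eq_integral: "mass a b = (\<integral>x. indicator {a..b} x * h x \<partial>lborel)"
  unfolding mass_def set_lebesgue_integral_def by simp

lemma AE_indicator_weight_nonneg: "AE x in lborel. 0 \<le> indicator A x * h x"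
  using AE_weight_pos by eventually_elim (simp add: indicator_def)

lemma nn_integral_indicator_weight:
  "(\<integral>\<^sup>+x. ennreal (indicator {a..b} x * h x) \<partial>lborel) = ennreal (mass a b)"
  unfolding mass_eq_integral
  by (rule nn_integral_eq_integral[OF integrable_indicator_weight AE_indicator_weight_nonneg])

lemma mass_nonneg: "0 \<le> mass a b"
  unfolding mass_eq_integral by (rule integral_nonneg_AE[OF AE_indicator_weight_nonneg])

lemma mass_pos:
  assumes "a < b"
  shows "0 < mass a b"
proof -
  have "mass a b \<noteq> 0"
  proof
    assume "mass a b = 0"
    then have "AE x in lborel. indicator {a..b} x * h x = 0"
      unfolding mass_eq_integral
      using integral_nonneg_eq_0_iff_AE[OF integrable_indicator_weight AE_indicator_weight_nonneg]
      by simp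
    with AE_weight_pos have "AE x in lborel. x \<notin> {a..b}"
      by eventually_elim (auto simp: indicator_def)
    then have "emeasure lborel {a..b} = 0"
      by (simp add: AE_iff_null_sets null_setsD1)
    with assms show False by simp
  qed
  with mass_nonneg show ?thesis
    by (simp add: order_less_le)
qed

lemma mass_mono:
  assumes "{c..d} \<subseteq> {a..b}"
  shows "mass c d \<le> mass a b"
  unfolding mass_eq_integral
  by (rule integral_mono_AE[OF integrable_indicator_weight integrable_indicator_weight])
     (use AE_weight_pos assms in \<open>auto simp: indicator_def\<close>)

lemma mass_add_le:
  assumes "{a..b} \<subseteq> {e..f}" "{c..d} \<subseteq> {e..f}" "b \<le> c"
  shows "mass a b + mass c d \<le> mass e f"
proof -
  have "mass a b + mass c d = (\<integral>x. indicator {a..b} x * h x + indicator {c..d} x * h x \<partial>lborel)"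
    unfolding mass_eq_integral
    by (rule Bochner_Integration.integral_add[symmetric])
       (rule integrable_indicator_weight)+
  also have "\<dots> \<le> mass e f"
    unfolding mass_eq_integral
  proof (rule integral_mono_AE)
    have "AE x in lborel. x \<noteq> b"
      by (rule AE_lborel_singleton)
    then show "AE x in lborel. indicator {a..b} x * h x + indicator {c..d} x * h x
        \<le> indicator {e..f} x * h x"
      using AE_weight_pos
      by eventually_elim (use assms in \<open>auto simp: indicator_def subset_iff\<close>)
  qed (auto intro: integrable_indicator_weight)
  finally show ?thesis .
qed

definition quarter_fraction :: "real \<Rightarrow> bool" where
  "quarter_fraction k \<longleftrightarrow>
     (\<forall>a b c d. a < b \<and> a \<le> c \<and> d \<le> b \<and> 4 * (d - c) = b - a \<longrightarrow> k * mass a b \<le> mass c d)"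

lemma mass_half_le:
  assumes "quarter_fraction k" "0 < r"
  shows "mass (x - r / 2) (x + r / 2) \<le> (1 - k) * mass (x - r) (x + r)"
proof -
  have "k * mass (x - r) (x + r) \<le> mass (x + r / 2) (x + r)"
    using assms unfolding quarter_fraction_def by auto
  moreover have "mass (x - r / 2) (x + r / 2) + mass (x + r / 2) (x + r) \<le> mass (x - r) (x + r)"
    by (rule mass_add_le) (use assms in auto)
  ultimately show ?thesis
    by (simp add: algebra_simps)
qed

lemma quarter_fraction_less_one:
  assumes "quarter_fraction k"
  shows "k < 1"
proof -
  have "0 < mass (0 - 1 / 2) (0 + 1 / 2)"
    by (rule mass_pos) simp
  also have "\<dots> \<le> (1 - k) * mass (0 - 1) (0 + 1)"
    by (rule mass_half_le[OF assms]) simp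
  finally show ?thesis
    using mass_nonneg[of "0 - 1" "0 + 1"] by (auto simp: zero_less_mult_iff)
qed

lemma mass_halving_power:
  assumes "quarter_fraction k" "0 < r"
  shows "mass (x - r / 2 ^ n) (x + r / 2 ^ n) \<le> (1 - k) ^ n * mass (x - r) (x + r)"
proof (induction n)
  case (Suc n)
  have "mass (x - r / 2 ^ Suc n) (x + r / 2 ^ Suc n) \<le> (1 - k) * mass (x - r / 2 ^ n) (x + r / 2 ^ n)"
    using mass_half_le[OF assms(1), of "r / 2 ^ n" x] assms(2) by (simp add: field_simps)
  also have "\<dots> \<le> (1 - k) * ((1 - k) ^ n * mass (x - r) (x + r))"
    using Suc quarter_fraction_less_one[OF assms(1)] by (intro mult_left_mono) auto
  finally show ?case by simp
qed simp

lemma integrable_dominated_by_geometric_masses: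
  fixes \<phi> :: "real \<Rightarrow> real" and c a b :: "nat \<Rightarrow> real"
  assumes [measurable]: "\<phi> \<in> borel_measurable lborel"
    and \<phi>_nonneg: "\<And>t. 0 \<le> \<phi> t"
    and dominated: "\<And>t. \<exists>k. \<phi> t \<le> c k * (indicator {a k..b k} t * h t)"
    and c_nonneg: "\<And>k. 0 \<le> c k"
    and geometric: "\<And>k. c k * mass (a k) (b k) \<le> M * r ^ k"
    and r: "0 \<le> r" "r < 1"
  shows "integrable lborel \<phi>" and "integral\<^sup>L lborel \<phi> \<le> M / (1 - r)"
proof -
  have M: "0 \<le> M"
    using geometric[of 0] mult_nonneg_nonneg[OF c_nonneg[of 0] mass_nonneg[of "a 0" "b 0"]] by simp
  have "(\<integral>\<^sup>+t. \<phi> t \<partial>lborel) \<le> (\<integral>\<^sup>+t. (\<Sum>k. ennreal (c k * (indicator {a k..b k} t * h t))) \<partial>lborel)"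
  proof (rule nn_integral_mono)
    fix t
    obtain k where "\<phi> t \<le> c k * (indicator {a k..b k} t * h t)"
      using dominated by blast
    then have "ennreal (\<phi> t) \<le> ennreal (c k * (indicator {a k..b k} t * h t))"
      by (rule ennreal_leI)
    also have "\<dots> \<le> (\<Sum>k. ennreal (c k * (indicator {a k..b k} t * h t)))"
      using sum_le_suminf[of "\<lambda>k. ennreal (c k * (indicator {a k..b k} t * h t))" "{k}"] by simp
    finally show "ennreal (\<phi> t) \<le> (\<Sum>k. ennreal (c k * (indicator {a k..b k} t * h t)))" .
  qed
  also have "\<dots> = (\<Sum>k. (\<integral>\<^sup>+t. ennreal (c k * (indicator {a k..b k} t * h t)) \<partial>lborel))"
    by (rule nn_integral_suminf) measurable
  also have "\<dots> = (\<Sum>k. ennreal (c k) * ennreal (mass (a k) (b k)))"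
  proof -
    have "(\<integral>\<^sup>+t. ennreal (c k * (indicator {a k..b k} t * h t)) \<partial>lborel)
        = ennreal (c k) * (\<integral>\<^sup>+t. ennreal (indicator {a k..b k} t * h t) \<partial>lborel)" for k
      using c_nonneg[of k] by (simp only: ennreal_mult') (rule nn_integral_cmult, measurable)
    then show ?thesis
      by (simp only: nn_integral_indicator_weight)
  qed
  also have "\<dots> \<le> (\<Sum>k. ennreal (M * r ^ k))"
    by (intro suminf_le) (auto simp: ennreal_mult'[symmetric] c_nonneg intro!: ennreal_leI geometric)
  also have "\<dots> = ennreal (M / (1 - r))"
    using M r by (simp add: suminf_ennreal2 summable_geometric suminf_mult suminf_geometric divide_simps)
  finally have bound: "(\<integral>\<^sup>+t. \<phi> t \<partial>lborel) \<le> ennreal (M / (1 - r))" .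
  then show integrable: "integrable lborel \<phi>"
    using \<phi>_nonneg by (intro integrableI_nonneg) (auto simp: top_unique dest: order.strict_trans1[OF _ ennreal_less_top])
  show "integral\<^sup>L lborel \<phi> \<le> M / (1 - r)"
    using bound nn_integral_eq_integral[OF integrable] \<phi>_nonneg M r by (simp add: ennreal_le_iff)
qed

definition singular_weight :: "real \<Rightarrow> real \<Rightarrow> real \<Rightarrow> real" where
  "singular_weight \<delta> x t = (if 0 < \<bar>x - t\<bar> \<and> \<bar>x - t\<bar> < 1 then \<bar>x - t\<bar> powr (- \<delta>) * h t else 0)"

lemma singular_weight_integrable:
  fixes x k \<delta> :: real
  assumes h_nonneg: "\<And>t. 0 \<le> h t" and k: "quarter_fraction k"
    and \<delta>: "0 < \<delta>" "2 powr \<delta> * (1 - k) < 1"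
  shows "integrable lborel (singular_weight \<delta> x)"
    and "integral\<^sup>L lborel (singular_weight \<delta> x)
      \<le> 2 powr \<delta> * mass (x - 1) (x + 1) / (1 - 2 powr \<delta> * (1 - k))"
proof -
  define c :: "nat \<Rightarrow> real" where "c n = 2 powr \<delta> * (2 powr \<delta>) ^ n" for n
  have dominated: "\<exists>n. singular_weight \<delta> x t \<le> c n * (indicator {x - 1 / 2 ^ n..x + 1 / 2 ^ n} t * h t)" for t
  proof (cases "0 < \<bar>x - t\<bar> \<and> \<bar>x - t\<bar> < 1")
    case True
    then obtain n where n: "\<bar>x - t\<bar> \<le> 1 / 2 ^ n" "\<bar>x - t\<bar> powr (- \<delta>) \<le> c n"
      using neg_powr_le_dyadic[of "\<bar>x - t\<bar>" \<delta>] \<delta>(1) unfolding c_def by auto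
    then have "t \<in> {x - 1 / 2 ^ n..x + 1 / 2 ^ n}"
      by (auto simp: abs_le_iff)
    then show ?thesis
      using True n h_nonneg[of t] unfolding singular_weight_def by (intro exI[of _ n]) (simp add: mult_right_mono)
  next
    case False
    then have "singular_weight \<delta> x t = 0"
      unfolding singular_weight_def by (rule if_not_P)
    then show ?thesis
      using h_nonneg[of t] unfolding c_def by (intro exI[of _ 0]) simp
  qed
  have geometric: "c n * mass (x - 1 / 2 ^ n) (x + 1 / 2 ^ n)
      \<le> (2 powr \<delta> * mass (x - 1) (x + 1)) * (2 powr \<delta> * (1 - k)) ^ n" for n
  proof -
    have "c n * mass (x - 1 / 2 ^ n) (x + 1 / 2 ^ n) \<le> c n * ((1 - k) ^ n * mass (x - 1) (x + 1))"
      unfolding c_def by (intro mult_left_mono mass_halving_power[OF k]) auto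
    then show ?thesis
      unfolding c_def by (simp add: power_mult_distrib ac_simps)
  qed
  have c_nonneg: "0 \<le> c n" for n
    unfolding c_def by simp
  have ratio: "0 \<le> 2 powr \<delta> * (1 - k)"
    using quarter_fraction_less_one[OF k] by simp
  have "singular_weight \<delta> x \<in> borel_measurable lborel"
    unfolding singular_weight_def by measurable
  moreover have "0 \<le> singular_weight \<delta> x t" for t
    using h_nonneg[of t] unfolding singular_weight_def by simp
  ultimately show "integrable lborel (singular_weight \<delta> x)"
    and "integral\<^sup>L lborel (singular_weight \<delta> x)
      \<le> 2 powr \<delta> * mass (x - 1) (x + 1) / (1 - 2 powr \<delta> * (1 - k))"
    using integrable_dominated_by_geometric_masses[OF _ _ dominated c_nonneg geometric ratio \<delta>(2)]
    by blast+
qed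

end

section \<open>Muckenhoupt weights\<close>

locale Ap_weight_constant =
  fixes p C :: real and w :: "real \<Rightarrow> real"
  assumes p_gt_1: "1 < p" and Ap: "Ap_weight p w"
    and Ap_constant: "\<And>a b. a < b \<Longrightarrow>
      ((1 / (b - a)) * (LINT x:{a..b}|lborel. w x)) *
      ((1 / (b - a)) * (LINT x:{a..b}|lborel. w x powr (1 - conj_exp p))) powr (p - 1) \<le> C"
begin

abbreviation q :: real where "q \<equiv> conj_exp p"

definition \<sigma> :: "real \<Rightarrow> real" where
  "\<sigma> t = w t powr (1 - q)"

lemma q_gt_1: "1 < q"
  using p_gt_1 unfolding conj_exp_def by (simp add: field_simps)

lemma inverse_exponents_sum: "1 / p + 1 / q = 1"
  using p_gt_1 unfolding conj_exp_def by (simp add: field_simps)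

lemma exponents_minus_one_mult: "(p - 1) * (q - 1) = 1"
  using p_gt_1 unfolding conj_exp_def by (simp add: field_simps)

lemma p_div_q: "p / q = p - 1"
  using p_gt_1 unfolding conj_exp_def by (simp add: field_simps)

lemma p_times_q_minus_one: "p * (q - 1) = q"
  using p_gt_1 unfolding conj_exp_def by (simp add: field_simps)

lemma \<sigma>_nonneg: "0 \<le> \<sigma> t"
  unfolding \<sigma>_def by simp

sublocale W: interval_weight w
  using Ap unfolding Ap_weight_def by unfold_locales auto

sublocale S: interval_weight \<sigma>
proof
  show "\<sigma> \<in> borel_measurable lborel"
    using W.measurable_weight unfolding \<sigma>_def by measurable
  show "AE x in lborel. 0 < \<sigma> x"
    using W.AE_weight_pos by eventually_elim (simp add: \<sigma>_def)
  show "\<And>a b. a < b \<Longrightarrow> set_integrable lborel {a..b} \<sigma>"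
    using Ap unfolding Ap_weight_def \<sigma>_def by auto
qed

lemma mass_product_le:
  assumes "a < b"
  shows "W.mass a b * S.mass a b powr (p - 1) \<le> C * (b - a) powr p"
proof -
  have "(b - a) powr p = (b - a) * (b - a) powr (p - 1)"
    using assms powr_add[of "b - a" 1 "p - 1"] by simp
  moreover have "(S.mass a b / (b - a)) powr (p - 1) = S.mass a b powr (p - 1) / (b - a) powr (p - 1)"
    using assms S.mass_nonneg by (simp add: powr_divide)
  ultimately have "W.mass a b * S.mass a b powr (p - 1) / (b - a) powr p
      = (W.mass a b / (b - a)) * (S.mass a b / (b - a)) powr (p - 1)"
    using assms by simp
  also have "\<dots> \<le> C"
    using Ap_constant[OF assms] unfolding W.mass_def S.mass_def \<sigma>_def by simp
  finally show ?thesis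
    using assms by (simp add: divide_le_eq)
qed

text \<open>Hoelder's inequality for \<open>1 = w powr (1/p) * \<sigma> powr (1/q)\<close> on \<open>{a..b}\<close>.\<close>
lemma length_powr_le_mass_product:
  assumes "a < b"
  shows "(b - a) powr p \<le> W.mass a b * S.mass a b powr (p - 1)"
proof -
  define V U where "V = W.mass a b" and "U = S.mass a b"
  have V: "0 < V" and U: "0 < U"
    unfolding V_def U_def using assms by (auto intro: W.mass_pos S.mass_pos)
  define X where "X = V powr (1 / p) * U powr (1 / q)"
  have pointwise: "1 / X \<le> w t / (V * p) + \<sigma> t / (U * q)" if "0 < w t" for t
  proof -
    have "V powr (- (1 / p)) * U powr (- (1 / q))
        \<le> (V powr (- (1 / p))) powr p * w t / p + (U powr (- (1 / q))) powr q * w t powr (1 - q) / q"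
      using p_gt_1 q_gt_1 inverse_exponents_sum that by (intro Youngs_inequality_weighted) auto
    moreover have "V powr (- (1 / p)) * U powr (- (1 / q)) = 1 / X"
      unfolding X_def using V U by (simp add: powr_minus divide_simps)
    moreover have "(V powr (- (1 / p))) powr p = 1 / V" "(U powr (- (1 / q))) powr q = 1 / U"
      unfolding powr_powr using V U p_gt_1 q_gt_1 by (simp_all add: powr_minus_divide)
    ultimately show ?thesis
      unfolding \<sigma>_def by (simp add: field_simps)
  qed
  have "(b - a) / X = (\<integral>x. indicator {a..b} x * (1 / X) \<partial>lborel)"
    using assms by (simp add: measure_lborel_Icc)
  also have "\<dots> \<le> (\<integral>x. indicator {a..b} x * w x / (V * p) + indicator {a..b} x * \<sigma> x / (U * q) \<partial>lborel)"
  proof (rule integral_mono_AE)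
    show "integrable lborel (\<lambda>x. indicator {a..b} x * (1 / X))"
      by (intro integrable_mult_left integrable_real_indicator) (auto simp: emeasure_lborel_Icc_eq)
    show "integrable lborel (\<lambda>x. indicator {a..b} x * w x / (V * p) + indicator {a..b} x * \<sigma> x / (U * q))"
      by (intro Bochner_Integration.integrable_add integrable_divide
          W.integrable_indicator_weight S.integrable_indicator_weight)
    show "AE x in lborel. indicator {a..b} x * (1 / X)
        \<le> indicator {a..b} x * w x / (V * p) + indicator {a..b} x * \<sigma> x / (U * q)"
      using W.AE_weight_pos by eventually_elim (use pointwise in \<open>auto simp: indicator_def\<close>)
  qed
  also have "\<dots> = V / (V * p) + U / (U * q)"
    unfolding V_def U_def W.mass_eq_integral S.mass_eq_integral
    by (simp add: W.integrable_indicator_weight S.integrable_indicator_weight)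
  also have "\<dots> = 1"
    using V U inverse_exponents_sum by simp
  finally have "b - a \<le> X"
    using V U unfolding X_def by (simp add: divide_le_eq)
  then have "(b - a) powr p \<le> X powr p"
    using assms p_gt_1 by (intro powr_mono2) auto
  also have "X powr p = V * U powr (p - 1)"
    unfolding X_def using V U p_gt_1 by (simp add: powr_mult powr_powr p_div_q)
  finally show ?thesis
    unfolding V_def U_def .
qed

lemma C_pos: "0 < C"
proof -
  have "0 < (1 - 0) powr p"
    by simp
  also have "\<dots> \<le> W.mass 0 1 * S.mass 0 1 powr (p - 1)"
    by (rule length_powr_le_mass_product) simp
  also have "\<dots> \<le> C * (1 - 0) powr p"
    by (rule mass_product_le) simp
  finally show ?thesis
    by simp
qed

definition D :: real where
  "D = C * 4 powr p"

lemma D_pos: "0 < D"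
  unfolding D_def using C_pos by simp

lemma mass_product_le_quarter:
  assumes "a < b" "a \<le> c" "d \<le> b" "4 * (d - c) = b - a"
  shows "W.mass a b * S.mass a b powr (p - 1) \<le> D * (W.mass c d * S.mass c d powr (p - 1))"
proof -
  have "c < d"
    using assms by (auto simp: algebra_simps)
  have "W.mass a b * S.mass a b powr (p - 1) \<le> C * (b - a) powr p"
    by (rule mass_product_le[OF assms(1)])
  also have "\<dots> = D * (d - c) powr p"
    unfolding D_def assms(4)[symmetric] using \<open>c < d\<close> by (subst powr_mult) auto
  also have "\<dots> \<le> D * (W.mass c d * S.mass c d powr (p - 1))"
    using D_pos length_powr_le_mass_product[OF \<open>c < d\<close>] by (intro mult_left_mono) auto
  finally show ?thesis .
qed

lemma W_quarter_fraction: "W.quarter_fraction (1 / D)"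
  unfolding W.quarter_fraction_def
proof (intro allI impI, elim conjE)
  fix a b c d :: real
  assume quarter: "a < b" "a \<le> c" "d \<le> b" "4 * (d - c) = b - a"
  have "W.mass a b * S.mass a b powr (p - 1) \<le> D * (W.mass c d * S.mass c d powr (p - 1))"
    by (rule mass_product_le_quarter[OF quarter])
  also have "\<dots> \<le> D * (W.mass c d * S.mass a b powr (p - 1))"
    using D_pos quarter p_gt_1 W.mass_nonneg S.mass_nonneg S.mass_mono[of c d a b]
    by (intro mult_left_mono powr_mono2) auto
  finally have "W.mass a b * S.mass a b powr (p - 1) \<le> (D * W.mass c d) * S.mass a b powr (p - 1)"
    by (simp add: ac_simps)
  then have "W.mass a b \<le> D * W.mass c d"
    using S.mass_pos[OF quarter(1)] by (simp add: mult_le_cancel_right_pos)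
  then show "1 / D * W.mass a b \<le> W.mass c d"
    using D_pos by (simp add: field_simps)
qed

lemma S_quarter_fraction: "S.quarter_fraction (D powr (1 - q))"
  unfolding S.quarter_fraction_def
proof (intro allI impI, elim conjE)
  fix a b c d :: real
  assume quarter: "a < b" "a \<le> c" "d \<le> b" "4 * (d - c) = b - a"
  have "W.mass a b * S.mass a b powr (p - 1) \<le> D * (W.mass c d * S.mass c d powr (p - 1))"
    by (rule mass_product_le_quarter[OF quarter])
  also have "\<dots> \<le> D * (W.mass a b * S.mass c d powr (p - 1))"
    using D_pos quarter W.mass_mono[of c d a b] by (intro mult_left_mono mult_right_mono) auto
  finally have "S.mass a b powr (p - 1) * W.mass a b \<le> (D * S.mass c d powr (p - 1)) * W.mass a b"
    by (simp add: ac_simps)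
  then have "S.mass a b powr (p - 1) \<le> D * S.mass c d powr (p - 1)"
    using W.mass_pos[OF quarter(1)] by (simp add: mult_le_cancel_right_pos)
  then have "(S.mass a b powr (p - 1)) powr (q - 1) \<le> (D * S.mass c d powr (p - 1)) powr (q - 1)"
    using q_gt_1 by (intro powr_mono2) auto
  then have "S.mass a b \<le> D powr (q - 1) * S.mass c d"
    using D_pos S.mass_nonneg
    by (simp add: powr_powr powr_mult exponents_minus_one_mult)
  then have "D powr (1 - q) * S.mass a b \<le> D powr (1 - q) * (D powr (q - 1) * S.mass c d)"
    by (intro mult_left_mono) auto
  also have "\<dots> = S.mass c d"
    using D_pos by (simp add: powr_add[symmetric] mult.assoc[symmetric])
  finally show "D powr (1 - q) * S.mass a b \<le> S.mass c d" .
qed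

lemma W_mass_dyadic_growth:
  "W.mass (-1) 1 \<le> (1 - 1 / D) ^ n * W.mass (- (2 ^ n)) (2 ^ n)"
  using W.mass_halving_power[OF W_quarter_fraction, of "2 ^ n" 0 n] by simp

lemma S_mass_dyadic_le:
  defines "\<rho> \<equiv> (1 - 1 / D) powr (q - 1)"
  shows "S.mass (- (2 ^ n)) (2 ^ n)
    \<le> 2 powr q * (C / W.mass (-1) 1) powr (q - 1) * (2 powr q) ^ n * \<rho> ^ n"
proof -
  define Wn Sn W0 where "Wn = W.mass (- (2 ^ n)) (2 ^ n)"
    and "Sn = S.mass (- (2 ^ n)) (2 ^ n)" and "W0 = W.mass (-1) 1"
  have Wn: "0 < Wn" and Sn: "0 < Sn" and W0: "0 < W0"
    unfolding Wn_def Sn_def W0_def by (auto intro!: W.mass_pos S.mass_pos)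
  have k: "0 < 1 - 1 / D"
    using W.quarter_fraction_less_one[OF W_quarter_fraction] by simp
  have "Wn * Sn powr (p - 1) \<le> C * (2 ^ Suc n) powr p"
    using mass_product_le[of "- (2 ^ n)" "2 ^ n"] unfolding Wn_def Sn_def by simp
  then have "Sn powr (p - 1) \<le> C * (2 ^ Suc n) powr p / Wn"
    using Wn by (simp add: field_simps)
  also have "\<dots> \<le> C * (2 ^ Suc n) powr p * (1 - 1 / D) ^ n / W0"
  proof -
    have "1 / Wn \<le> (1 - 1 / D) ^ n / W0"
      using W_mass_dyadic_growth[of n] Wn W0 unfolding Wn_def W0_def by (simp add: field_simps)
    then show ?thesis
      using C_pos mult_left_mono[of "1 / Wn" "(1 - 1 / D) ^ n / W0" "C * (2 ^ Suc n) powr p"]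
      by simp
  qed
  finally have "(Sn powr (p - 1)) powr (q - 1) \<le> (C * (2 ^ Suc n) powr p * (1 - 1 / D) ^ n / W0) powr (q - 1)"
    using q_gt_1 by (intro powr_mono2) auto
  also have "(Sn powr (p - 1)) powr (q - 1) = Sn"
    using Sn by (simp add: powr_powr exponents_minus_one_mult)
  also have "(C * (2 ^ Suc n) powr p * (1 - 1 / D) ^ n / W0) powr (q - 1)
      = (C / W0) powr (q - 1) * (2 powr q) ^ Suc n * \<rho> ^ n"
    using C_pos W0 k unfolding \<rho>_def
    by (simp add: powr_mult powr_divide powr_powr p_times_q_minus_one power_powr_commute)
  finally show ?thesis
    unfolding Sn_def W0_def by (simp add: ac_simps)
qed

lemma integrable_\<sigma>_decay: "integrable lborel (\<lambda>t. \<sigma> t * (1 + \<bar>t\<bar>) powr (- q))"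
proof -
  define \<rho> where "\<rho> = (1 - 1 / D) powr (q - 1)"
  define K where "K = 2 powr q * (C / W.mass (-1) 1) powr (q - 1)"
  define c :: "nat \<Rightarrow> real" where "c n = 2 powr q * (2 powr (- q)) ^ n" for n
  have "0 < 1 / D" "1 / D < 1"
    using W.quarter_fraction_less_one[OF W_quarter_fraction] D_pos by auto
  then have \<rho>: "0 \<le> \<rho>" "\<rho> < 1"
    unfolding \<rho>_def using powr_less_mono2[of "q - 1" "1 - 1 / D" 1] q_gt_1 by auto
  have dominated: "\<exists>n. \<sigma> t * (1 + \<bar>t\<bar>) powr (- q) \<le> c n * (indicator {- (2 ^ n)..2 ^ n} t * \<sigma> t)" for t
  proof -
    obtain n :: nat where n: "2 ^ n \<le> 1 + \<bar>t\<bar>" "1 + \<bar>t\<bar> < 2 ^ Suc n"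
      using ex_power_of_two_bracket[of "1 + \<bar>t\<bar>"] by auto
    have "t \<in> {- (2 ^ Suc n)..2 ^ Suc n}"
      using n(2) by auto
    moreover have "(1 + \<bar>t\<bar>) powr (- q) \<le> (2 ^ n) powr (- q)"
      using n(1) q_gt_1 by (intro powr_mono2') auto
    moreover have "(2 ^ n) powr (- q) = c (Suc n)"
      unfolding c_def by (simp add: power_powr_commute powr_add[symmetric])
    ultimately show ?thesis
      using \<sigma>_nonneg[of t] mult_left_mono[of "(1 + \<bar>t\<bar>) powr (- q)" "c (Suc n)" "\<sigma> t"]
      by (intro exI[of _ "Suc n"]) (simp add: mult.commute)
  qed
  have geometric: "c n * S.mass (- (2 ^ n)) (2 ^ n) \<le> (2 powr q * K) * \<rho> ^ n" for n
  proof -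
    have "c n * S.mass (- (2 ^ n)) (2 ^ n) \<le> c n * (K * (2 powr q) ^ n * \<rho> ^ n)"
      unfolding K_def \<rho>_def c_def by (intro mult_left_mono S_mass_dyadic_le) auto
    also have "\<dots> = 2 powr q * K * \<rho> ^ n * (2 powr (- q) * 2 powr q) ^ n"
      unfolding c_def by (simp add: power_mult_distrib ac_simps)
    also have "2 powr (- q) * 2 powr q = (1::real)"
      by (simp add: powr_add[symmetric])
    finally show ?thesis
      by simp
  qed
  show ?thesis
    by (rule S.integrable_dominated_by_geometric_masses(1)[OF _ _ dominated _ geometric \<rho>])
       (auto simp: c_def \<sigma>_nonneg)
qed

subsection \<open>The logarithmic kernel\<close>

lemma singular_exponent_\<sigma>:
  obtains \<delta> K where "0 < \<delta>" "0 \<le> K"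
    and "\<And>x. integrable lborel (S.singular_weight \<delta> x)"
    and "\<And>x. integral\<^sup>L lborel (S.singular_weight \<delta> x) \<le> K * S.mass (x - 1) (x + 1)"
proof -
  define k where "k = D powr (1 - q)"
  have "0 \<le> 1 - k" "1 - k < 1"
    using S.quarter_fraction_less_one[OF S_quarter_fraction] D_pos unfolding k_def by auto
  then obtain \<delta> where \<delta>: "0 < \<delta>" "2 powr \<delta> * (1 - k) < 1"
    by (rule ex_two_powr_mult_less_one)
  note singular = S.singular_weight_integrable[OF \<sigma>_nonneg S_quarter_fraction[folded k_def] \<delta>]
  show ?thesis
  proof (rule that[OF \<delta>(1) _ singular(1)])
    show "0 \<le> 2 powr \<delta> / (1 - 2 powr \<delta> * (1 - k))"
      using \<delta> by simp
    show "integral\<^sup>L lborel (S.singular_weight \<delta> x)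
        \<le> 2 powr \<delta> / (1 - 2 powr \<delta> * (1 - k)) * S.mass (x - 1) (x + 1)" for x
      using singular(2)[of x] by simp
  qed
qed

lemma kernel_powr_\<sigma>_bounded:
  fixes R :: real
  obtains B where "\<And>x. \<bar>x\<bar> \<le> R \<Longrightarrow> integrable lborel (\<lambda>t. \<bar>ln (\<bar>x - t\<bar> / (1 + \<bar>t\<bar>))\<bar> powr q * \<sigma> t)"
    and "\<And>x. \<bar>x\<bar> \<le> R \<Longrightarrow> (\<integral>t. \<bar>ln (\<bar>x - t\<bar> / (1 + \<bar>t\<bar>))\<bar> powr q * \<sigma> t \<partial>lborel) \<le> B"
proof -
  obtain \<delta> K where \<delta>: "0 < \<delta>" "0 \<le> K"
    and singular_integrable: "\<And>x. integrable lborel (S.singular_weight \<delta> x)"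
    and singular_integral: "\<And>x. integral\<^sup>L lborel (S.singular_weight \<delta> x) \<le> K * S.mass (x - 1) (x + 1)"
    using singular_exponent_\<sigma> by blast
  \<comment> \<open>The \<open>q\<close>-th power of the majorant \<open>|x - t| powr -\<gamma> / \<gamma>\<close> of the logarithmic
    singularity is then a multiple of \<open>|x - t| powr -\<delta>\<close>.\<close>
  define \<gamma> where "\<gamma> = \<delta> / q"
  have \<gamma>: "0 < \<gamma>" "\<gamma> * q = \<delta>"
    unfolding \<gamma>_def using \<delta> q_gt_1 by auto
  define A where "A = 2 powr q * (4 * (1 + R)\<^sup>2) powr q"
  define A' where "A' = 2 powr q * \<gamma> powr (- q)"
  define majorant where "majorant x t = A * (\<sigma> t * (1 + \<bar>t\<bar>) powr (- q))
    + A' * S.singular_weight \<delta> x t" for x t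
  have majorant_integrable: "integrable lborel (majorant x)" for x
    unfolding majorant_def
    by (intro Bochner_Integration.integrable_add integrable_mult_right integrable_\<sigma>_decay singular_integrable)
  have dominated: "\<bar>ln (\<bar>x - t\<bar> / (1 + \<bar>t\<bar>))\<bar> powr q * \<sigma> t \<le> majorant x t" if "\<bar>x\<bar> \<le> R" for x t
  proof -
    have "\<bar>ln (\<bar>x - t\<bar> / (1 + \<bar>t\<bar>))\<bar> powr q * \<sigma> t
      \<le> 2 powr q * ((4 * (1 + R)\<^sup>2) powr q * (1 + \<bar>t\<bar>) powr (- q) + \<gamma> powr (- q)
        * (if 0 < \<bar>x - t\<bar> \<and> \<bar>x - t\<bar> < 1 then \<bar>x - t\<bar> powr (- (\<gamma> * q)) else 0)) * \<sigma> t"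
      by (rule mult_right_mono[OF abs_ln_kernel_powr_le[OF \<gamma>(1) that] \<sigma>_nonneg]) (use q_gt_1 in simp)
    then show ?thesis
      unfolding majorant_def A_def A'_def S.singular_weight_def \<gamma>(2)
      by (cases "0 < \<bar>x - t\<bar> \<and> \<bar>x - t\<bar> < 1")
         (simp_all only: if_True if_False, simp_all add: algebra_simps)
  qed
  have integrable: "integrable lborel (\<lambda>t. \<bar>ln (\<bar>x - t\<bar> / (1 + \<bar>t\<bar>))\<bar> powr q * \<sigma> t)"
    if "\<bar>x\<bar> \<le> R" for x
    by (rule Bochner_Integration.integrable_bound[OF majorant_integrable[of x]])
       (use dominated[OF that] \<sigma>_nonneg in \<open>auto intro!: AE_I2 order_trans[OF _ abs_ge_self]\<close>)
  show ?thesis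
  proof (rule that[OF integrable])
    fix x :: real
    assume x: "\<bar>x\<bar> \<le> R"
    have "S.mass (x - 1) (x + 1) \<le> S.mass (- R - 1) (R + 1)"
      using x by (intro S.mass_mono) auto
    then have "A' * integral\<^sup>L lborel (S.singular_weight \<delta> x) \<le> A' * (K * S.mass (- R - 1) (R + 1))"
      using singular_integral[of x] \<delta>(2) unfolding A'_def
      by (intro mult_left_mono) (auto intro: order_trans mult_left_mono)
    then have "(\<integral>t. majorant x t \<partial>lborel)
        \<le> A * (\<integral>t. \<sigma> t * (1 + \<bar>t\<bar>) powr (- q) \<partial>lborel) + A' * (K * S.mass (- R - 1) (R + 1))"
      unfolding majorant_def by (simp add: integrable_\<sigma>_decay singular_integrable)
    then show "(\<integral>t. \<bar>ln (\<bar>x - t\<bar> / (1 + \<bar>t\<bar>))\<bar> powr q * \<sigma> t \<partial>lborel)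
        \<le> A * (\<integral>t. \<sigma> t * (1 + \<bar>t\<bar>) powr (- q) \<partial>lborel) + A' * (K * S.mass (- R - 1) (R + 1))"
      using integral_mono[OF integrable[OF x] majorant_integrable dominated[OF x]] by linarith
  qed
qed

lemma kernel_integral_bounded:
  fixes f :: "real \<Rightarrow> real" and R :: real
  assumes f: "in_Lp_weighted p w f"
  obtains B where "\<And>x. \<bar>x\<bar> \<le> R \<Longrightarrow> integrable lborel (\<lambda>t. ln (\<bar>x - t\<bar> / (1 + \<bar>t\<bar>)) * f t)"
    and "\<And>x. \<bar>x\<bar> \<le> R \<Longrightarrow> \<bar>\<integral>t. ln (\<bar>x - t\<bar> / (1 + \<bar>t\<bar>)) * f t \<partial>lborel\<bar> \<le> B"
proof -
  have [measurable]: "f \<in> borel_measurable lborel"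
    and f_integrable: "integrable lborel (\<lambda>t. \<bar>f t\<bar> powr p * w t)"
    using f unfolding in_Lp_weighted_def by auto
  obtain B where kernel_integrable: "\<And>x. \<bar>x\<bar> \<le> R \<Longrightarrow> integrable lborel (\<lambda>t. \<bar>ln (\<bar>x - t\<bar> / (1 + \<bar>t\<bar>))\<bar> powr q * \<sigma> t)"
    and kernel_integral: "\<And>x. \<bar>x\<bar> \<le> R \<Longrightarrow> (\<integral>t. \<bar>ln (\<bar>x - t\<bar> / (1 + \<bar>t\<bar>))\<bar> powr q * \<sigma> t \<partial>lborel) \<le> B"
    using kernel_powr_\<sigma>_bounded by blast
  define majorant where "majorant x t = \<bar>f t\<bar> powr p * w t / p
    + \<bar>ln (\<bar>x - t\<bar> / (1 + \<bar>t\<bar>))\<bar> powr q * \<sigma> t / q" for x t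
  have majorant_integrable: "integrable lborel (majorant x)" if "\<bar>x\<bar> \<le> R" for x
    unfolding majorant_def
    by (intro Bochner_Integration.integrable_add integrable_divide f_integrable kernel_integrable that)
  have dominated: "AE t in lborel. \<bar>ln (\<bar>x - t\<bar> / (1 + \<bar>t\<bar>)) * f t\<bar> \<le> majorant x t" for x
    using W.AE_weight_pos
  proof eventually_elim
    case (elim t)
    show ?case
      unfolding majorant_def \<sigma>_def abs_mult mult.commute[of "\<bar>ln _\<bar>"]
      using elim p_gt_1 q_gt_1 inverse_exponents_sum by (intro Youngs_inequality_weighted) auto
  qed
  have integrable: "integrable lborel (\<lambda>t. ln (\<bar>x - t\<bar> / (1 + \<bar>t\<bar>)) * f t)" if "\<bar>x\<bar> \<le> R" for x
    by (rule Bochner_Integration.integrable_bound[OF majorant_integrable[OF that]])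
       (use dominated[of x] in \<open>auto elim!: eventually_mono\<close>)
  show ?thesis
  proof (rule that[OF integrable])
    fix x :: real
    assume x: "\<bar>x\<bar> \<le> R"
    have "\<bar>\<integral>t. ln (\<bar>x - t\<bar> / (1 + \<bar>t\<bar>)) * f t \<partial>lborel\<bar>
        \<le> (\<integral>t. \<bar>ln (\<bar>x - t\<bar> / (1 + \<bar>t\<bar>)) * f t\<bar> \<partial>lborel)"
      by (rule integral_abs_bound)
    also have "\<dots> \<le> (\<integral>t. majorant x t \<partial>lborel)"
      by (rule integral_mono_AE[OF _ majorant_integrable[OF x] dominated]) (use integrable[OF x] in auto)
    also have "\<dots> \<le> (\<integral>t. \<bar>f t\<bar> powr p * w t \<partial>lborel) / p + B / q"
      using kernel_integral[OF x] q_gt_1 unfolding majorant_def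
      by (simp add: f_integrable kernel_integrable[OF x] divide_right_mono)
    finally show "\<bar>\<integral>t. ln (\<bar>x - t\<bar> / (1 + \<bar>t\<bar>)) * f t \<partial>lborel\<bar>
        \<le> (\<integral>t. \<bar>f t\<bar> powr p * w t \<partial>lborel) / p + B / q" .
  qed
qed

end

lemma opB_measurable:
  assumes [measurable]: "f \<in> borel_measurable lborel"
  shows "opB f \<in> borel_measurable borel"
proof -
  have "(\<lambda>(x, t). ln (\<bar>x - t\<bar> / (1 + \<bar>t\<bar>)) * f t) \<in> borel_measurable (lborel \<Otimes>\<^sub>M lborel)"
    by measurable
  from lborel.borel_measurable_lebesgue_integral[OF this]
  show ?thesis
    unfolding opB_def[abs_def] by measurable
qed

lemma locally_integrable_comp_continuous:
  fixes g \<Psi> :: "real \<Rightarrow> real"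
  assumes g: "g \<in> borel_measurable borel"
    and bounded: "\<And>R. \<exists>B. \<forall>y. \<bar>y\<bar> \<le> R \<longrightarrow> \<bar>g y\<bar> \<le> B"
    and \<Psi>: "continuous_on UNIV \<Psi>"
  shows "locally_integrable (\<lambda>x. g (\<Psi> x))"
  unfolding locally_integrable_def set_integrable_def
proof (intro allI impI)
  fix K :: "real set"
  assume K: "compact K"
  have "bounded (\<Psi> ` K)"
    using compact_continuous_image[OF continuous_on_subset[OF \<Psi>] K] compact_imp_bounded by blast
  then obtain R where R: "\<And>y. y \<in> K \<Longrightarrow> \<bar>\<Psi> y\<bar> \<le> R"
    unfolding bounded_iff by auto
  obtain B where B: "\<And>y. \<bar>y\<bar> \<le> R \<Longrightarrow> \<bar>g y\<bar> \<le> B"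
    using bounded by blast
  have "(\<lambda>x. g (\<Psi> x)) \<in> borel_measurable lborel"
    using measurable_compose[OF borel_measurable_continuous_onI[OF \<Psi>] g] by simp
  then show "integrable lborel (\<lambda>x. indicator K x *\<^sub>R g (\<Psi> x))"
    using K R B emeasure_bounded_finite[OF compact_imp_bounded[OF K]]
    by (intro integrableI_bounded_set_indicator[where B = B]) (auto simp: compact_imp_closed)
qed

theorem lemma2p8:
  fixes p :: real and \<Psi> \<Psi>inv w f :: "real \<Rightarrow> real"
  assumes "1 < p"
    and "homeomorphism UNIV UNIV \<Psi> \<Psi>inv"
    and "locally_abs_continuous \<Psi>"
    and "Ap_weight p w"
    and "in_Lp_weighted p w f"
  shows "(\<forall>x. integrable lborel (\<lambda>t. ln (\<bar>x - t\<bar> / (1 + \<bar>t\<bar>)) * f t))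
         \<and> locally_integrable (\<lambda>x. opB f (\<Psi> x))"
proof -
  obtain C where "\<forall>a b. a < b \<longrightarrow>
      ((1 / (b - a)) * (LINT x:{a..b}|lborel. w x)) *
      ((1 / (b - a)) * (LINT x:{a..b}|lborel. w x powr (1 - conj_exp p))) powr (p - 1) \<le> C"
    using assms(4) unfolding Ap_weight_def by blast
  then interpret Ap_weight_constant p C w
    using assms(1,4) by unfold_locales auto
  have integrable: "integrable lborel (\<lambda>t. ln (\<bar>x - t\<bar> / (1 + \<bar>t\<bar>)) * f t)" for x
    using kernel_integral_bounded[OF assms(5), of "\<bar>x\<bar>"] by blast
  have "\<exists>B. \<forall>x. \<bar>x\<bar> \<le> R \<longrightarrow> \<bar>opB f x\<bar> \<le> B" for R
  proof -
    obtain B where "\<And>x. \<bar>x\<bar> \<le> R \<Longrightarrow> \<bar>\<integral>t. ln (\<bar>x - t\<bar> / (1 + \<bar>t\<bar>)) * f t \<partial>lborel\<bar> \<le> B"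
      using kernel_integral_bounded[OF assms(5), of R] by blast
    then show ?thesis
      unfolding opB_def by (intro exI[of _ "B / pi"]) (simp add: abs_mult divide_right_mono)
  qed
  moreover have "opB f \<in> borel_measurable borel"
    using assms(5) unfolding in_Lp_weighted_def by (intro opB_measurable) auto
  moreover have "continuous_on UNIV \<Psi>"
    using assms(2) unfolding homeomorphism_def by auto
  ultimately show ?thesis
    using integrable locally_integrable_comp_continuous by blast
qed

end
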